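(* Fix $0<\epsilon<2$. (1) If $2\le p_1<p_2<\infty$, then $\delta(p_2,\epsilon)<\delta(p_1,\epsilon)$. (2) If $1<p_1<p_2\le 2$, then $\delta(p_1,\epsilon)<\delta(p_2,\epsilon)$.
   Context: For $1<p<\infty$ and $0<\epsilon\le2$: if $1<p\le2$, $\delta(p,\epsilon)$ is the unique $\delta\in[0,1]$ with $(1-\delta+\frac{\epsilon}{2})^p+|1-\delta-\frac{\epsilon}{2}|^p=2$; if $p\ge2$, $\delta(p,\epsilon)=1-\left(1-(\frac{\epsilon}{2})^p\right)^{1/p}$. *)

theory Defs
  imports "HOL-Analysis.Analysis"
begin

text \<open>Modulus-of-convexity constant delta(p, eps) for 1 < p < infinity, 0 < eps <= 2.
  For 1 < p <= 2 it is the unique delta in [0,1] solving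
  (1 - delta + eps/2)^p + |1 - delta - eps/2|^p = 2;
  for p >= 2 it is 1 - (1 - (eps/2)^p)^(1/p).  (At p = 2 both agree.)\<close>

definition delta :: "real \<Rightarrow> real \<Rightarrow> real" where
  "delta p \<epsilon> =
     (if p \<le> 2 then
        (THE d. 0 \<le> d \<and> d \<le> 1 \<and>
           (1 - d + \<epsilon> / 2) powr p + \<bar>1 - d - \<epsilon> / 2\<bar> powr p = 2)
      else 1 - (1 - (\<epsilon> / 2) powr p) powr (1 / p))"

end

theory Submission
  imports Defs
begin

text \<open>Put \<open>a = \<epsilon>/2\<close>. For \<open>p \<ge> 2\<close>, \<open>1 - \<delta>(p,\<epsilon>) = b\<^sub>p = (1 - a\<^sup>p)\<^bsup>1/p\<^esup>\<close>, and \<open>b\<^sub>p\<close>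
  increases with \<open>p\<close> because \<open>b\<^sub>p\<^sup>q < b\<^sub>p\<^sup>p = 1 - a\<^sup>p < 1 - a\<^sup>q = b\<^sub>q\<^sup>q\<close> for \<open>p < q\<close>.
  For \<open>1 < p \<le> 2\<close>, \<open>t = 1 - \<delta>(p,\<epsilon>)\<close> is the root of \<open>(t + a)\<^sup>p + |t - a|\<^sup>p = 2\<close>, whose
  left-hand side is strictly increasing in \<open>t \<ge> 0\<close>. Writing its two summands at the root as
  \<open>1 + u\<close> and \<open>1 - u\<close>, the left-hand side for an exponent \<open>q > p\<close> becomes
  \<open>(1 + u)\<^sup>r + (1 - u)\<^sup>r > 2\<close> with \<open>r = q/p > 1\<close>, so the root for \<open>q\<close> is smaller.\<close>

definition shifted_powr_sum :: "real \<Rightarrow> real \<Rightarrow> real \<Rightarrow> real" where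
  "shifted_powr_sum a p t = (t + a) powr p + \<bar>t - a\<bar> powr p"

lemma shifted_powr_sum_strict_mono_below:
  fixes a p t s :: real
  assumes "1 < p" and "0 \<le> t" "t < s" "s \<le> a"
  shows "shifted_powr_sum a p t < shifted_powr_sum a p s"
proof -
  let ?g = "\<lambda>x. (x + a) powr p + (a - x) powr p"
  have "?g t < ?g s"
  proof (rule DERIV_pos_imp_increasing_open[OF \<open>t < s\<close>])
    fix x assume x: "t < x" "x < s"
    have "(?g has_real_derivative p * (x + a) powr (p - 1) - p * (a - x) powr (p - 1)) (at x)"
      using x assms by (auto intro!: derivative_eq_intros simp: powr_diff)
    moreover have "(a - x) powr (p - 1) < (x + a) powr (p - 1)"
      using x assms by (intro powr_less_mono2) auto
    ultimately show "\<exists>y. (?g has_real_derivative y) (at x) \<and> 0 < y"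
      using \<open>1 < p\<close> by auto
  next
    show "continuous_on {t..s} ?g"
      using assms by (intro continuous_intros continuous_on_powr') auto
  qed
  then show ?thesis
    using assms by (simp add: shifted_powr_sum_def abs_minus_commute abs_of_nonneg)
qed

lemma shifted_powr_sum_strict_mono_above:
  fixes a p t s :: real
  assumes "0 < a" "0 < p" "a \<le> t" "t < s"
  shows "shifted_powr_sum a p t < shifted_powr_sum a p s"
proof -
  have "(t + a) powr p < (s + a) powr p"
    using assms by (intro powr_less_mono2) auto
  moreover have "\<bar>t - a\<bar> powr p \<le> \<bar>s - a\<bar> powr p"
    using assms by (intro powr_mono2) auto
  ultimately show ?thesis
    unfolding shifted_powr_sum_def by simp
qed

lemma shifted_powr_sum_strict_mono:
  fixes a p t s :: real
  assumes "0 < a" "1 < p" "0 \<le> t" "t < s"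
  shows "shifted_powr_sum a p t < shifted_powr_sum a p s"
proof -
  consider "s \<le> a" | "a \<le> t" | "t < a" "a < s" by linarith
  then show ?thesis
  proof cases
    case 3
    with assms shifted_powr_sum_strict_mono_below[of p t a a]
    have "shifted_powr_sum a p t < shifted_powr_sum a p a" by simp
    also have "\<dots> < shifted_powr_sum a p s"
      using assms 3 by (intro shifted_powr_sum_strict_mono_above) auto
    finally show ?thesis .
  qed (use assms shifted_powr_sum_strict_mono_below shifted_powr_sum_strict_mono_above in auto)
qed

lemma one_plus_minus_powr_gt_two:
  fixes p u :: real
  assumes "1 < p" "0 < u" "u \<le> 1"
  shows "2 < (1 + u) powr p + (1 - u) powr p"
  using shifted_powr_sum_strict_mono[of 1 p 0 u] assms
  by (simp add: shifted_powr_sum_def abs_minus_commute add.commute)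

lemma shifted_powr_sum_eq_two_exists:
  fixes a p :: real
  assumes "0 < a" "a < 1" "1 < p"
  obtains t where "0 < t" "t \<le> 1" "shifted_powr_sum a p t = 2"
proof -
  have "a powr p < 1"
    using assms powr_less_mono2[of p a 1] by simp
  then have below: "shifted_powr_sum a p 0 < 2"
    using assms by (simp add: shifted_powr_sum_def)
  have "2 < shifted_powr_sum a p 1"
    using one_plus_minus_powr_gt_two[of p a] assms
    by (simp add: shifted_powr_sum_def add.commute abs_minus_commute)
  moreover have "continuous_on {0..1} (shifted_powr_sum a p)"
    unfolding shifted_powr_sum_def using assms
    by (intro continuous_intros continuous_on_powr') auto
  ultimately obtain t where "0 \<le> t" "t \<le> 1" "shifted_powr_sum a p t = 2"
    using IVT'[of "shifted_powr_sum a p" 0 2 1] below by auto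
  moreover have "t \<noteq> 0" using below \<open>shifted_powr_sum a p t = 2\<close> by auto
  ultimately show ?thesis by (intro that) auto
qed

lemma delta_eq_if_shifted_powr_sum_eq_two:
  fixes \<epsilon> p t :: real
  assumes "0 < \<epsilon>" "1 < p" "p \<le> 2"
    and "0 \<le> t" "t \<le> 1" "shifted_powr_sum (\<epsilon>/2) p t = 2"
  shows "delta p \<epsilon> = 1 - t"
proof -
  have "(THE d. 0 \<le> d \<and> d \<le> 1 \<and>
           (1 - d + \<epsilon>/2) powr p + \<bar>1 - d - \<epsilon>/2\<bar> powr p = 2) = 1 - t"
  proof (rule the_equality)
    fix d
    assume "0 \<le> d \<and> d \<le> 1 \<and> (1 - d + \<epsilon>/2) powr p + \<bar>1 - d - \<epsilon>/2\<bar> powr p = 2"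
    then have "0 \<le> 1 - d" "shifted_powr_sum (\<epsilon>/2) p (1 - d) = 2"
      by (simp_all add: shifted_powr_sum_def)
    with assms have "\<not> 1 - d < t" "\<not> t < 1 - d"
      using shifted_powr_sum_strict_mono[of "\<epsilon>/2" p] by (metis half_gt_zero less_irrefl)+
    then show "d = 1 - t" by linarith
  qed (use assms in \<open>simp add: shifted_powr_sum_def\<close>)
  then show ?thesis
    unfolding delta_def using assms by simp
qed

lemma shifted_powr_sum_gt_two_larger_exponent:
  fixes a p q t :: real
  assumes "0 < a" "1 < p" "p < q" "0 < t" "shifted_powr_sum a p t = 2"
  shows "2 < shifted_powr_sum a q t"
proof -
  define u where "u = (t + a) powr p - 1"
  have "\<bar>t - a\<bar> powr p < (t + a) powr p"
    using assms by (intro powr_less_mono2) auto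
  moreover have "(t + a) powr p + \<bar>t - a\<bar> powr p = 2"
    using assms(5) unfolding shifted_powr_sum_def .
  ultimately have u: "0 < u" "u \<le> 1" "(t + a) powr p = 1 + u" "\<bar>t - a\<bar> powr p = 1 - u"
    using powr_ge_zero[of "\<bar>t - a\<bar>" p] unfolding u_def by linarith+
  have "x powr q = (x powr p) powr (q / p)" if "0 \<le> x" for x :: real
    using assms by (simp add: powr_powr)
  then have "shifted_powr_sum a q t = (1 + u) powr (q / p) + (1 - u) powr (q / p)"
    using assms unfolding shifted_powr_sum_def u(3,4)[symmetric]
    by (metis abs_ge_zero add_pos_pos less_le)
  also have "2 < \<dots>"
    using assms u by (intro one_plus_minus_powr_gt_two) auto
  finally show ?thesis .
qed

lemma complement_powr_root_strict_mono:
  fixes a p q :: real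
  assumes "0 < a" "a < 1" "0 < p" "p < q"
  shows "(1 - a powr p) powr (1 / p) < (1 - a powr q) powr (1 / q)"
proof -
  define b where "b = (\<lambda>r. (1 - a powr r) powr (1 / r))"
  have a_powr: "0 < a powr r" "a powr r < 1" if "0 < r" for r
  proof -
    show "0 < a powr r" using assms by simp
    show "a powr r < 1" using powr_less_mono2[of r a 1] assms that by simp
  qed
  have b_powr: "b r powr r = 1 - a powr r" if "0 < r" for r
    using a_powr[OF that] that by (simp add: b_def powr_powr)
  have b_bounds: "0 < b r" "b r < 1" if "0 < r" for r
  proof -
    show "0 < b r" using a_powr[OF that] by (simp add: b_def)
    show "b r < 1"
      using a_powr[OF that] that powr_less_mono2[of "1 / r" "1 - a powr r" 1] by (simp add: b_def)
  qed
  have "b p powr q < b p powr p"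
    using assms b_bounds[of p] by (intro powr_less_mono') auto
  also have "\<dots> < b q powr q"
    using assms b_powr[of p] b_powr[of q] powr_less_mono'[of a p q] by simp
  finally have "b p < b q"
    using assms b_bounds(1)[of p] b_bounds(1)[of q] powr_less_cancel2[of q "b p" "b q"] by linarith
  then show ?thesis
    by (simp add: b_def)
qed

lemma delta_ge_two:
  fixes \<epsilon> p :: real
  assumes "0 < \<epsilon>" "\<epsilon> < 2" "2 \<le> p"
  shows "delta p \<epsilon> = 1 - (1 - (\<epsilon>/2) powr p) powr (1 / p)"
proof (cases "p = 2")
  case True
  \<comment> \<open>at \<open>p = 2\<close> \<open>delta\<close> is given by the equation, solved by \<open>b = sqrt (1 - a\<^sup>2)\<close>\<close>
  define a where "a = \<epsilon>/2"
  define b where "b = sqrt (1 - a\<^sup>2)"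
  have a: "0 < a" "a < 1"
    using assms by (auto simp: a_def)
  then have b: "0 \<le> b" "b \<le> 1" "b\<^sup>2 = 1 - a\<^sup>2"
    by (auto simp: b_def power_le_one)
  have "shifted_powr_sum a 2 b = (b + a)\<^sup>2 + (b - a)\<^sup>2"
    using a b by (simp add: shifted_powr_sum_def powr_numeral)
  also have "\<dots> = 2"
    using b by (simp add: power2_eq_square algebra_simps)
  finally have "delta 2 \<epsilon> = 1 - b"
    using assms b by (intro delta_eq_if_shifted_powr_sum_eq_two) (auto simp: a_def)
  moreover have "(1 - a powr 2) powr (1 / 2) = b"
    using a by (simp add: b_def powr_half_sqrt powr_numeral power_le_one)
  ultimately show ?thesis
    using True by (simp add: a_def)
qed (use assms in \<open>simp add: delta_def\<close>)

lemma delta_strict_antimono_ge_two: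
  fixes \<epsilon> p q :: real
  assumes "0 < \<epsilon>" "\<epsilon> < 2" "2 \<le> p" "p < q"
  shows "delta q \<epsilon> < delta p \<epsilon>"
  using assms complement_powr_root_strict_mono[of "\<epsilon>/2" p q]
  by (simp add: delta_ge_two)

lemma delta_strict_mono_le_two:
  fixes \<epsilon> p q :: real
  assumes \<epsilon>: "0 < \<epsilon>" "\<epsilon> < 2" and "1 < p" "p < q" "q \<le> 2"
  shows "delta p \<epsilon> < delta q \<epsilon>"
proof -
  have a: "0 < \<epsilon>/2" "\<epsilon>/2 < 1"
    using \<epsilon> by auto
  obtain s where s: "0 < s" "s \<le> 1" "shifted_powr_sum (\<epsilon>/2) p s = 2"
    using shifted_powr_sum_eq_two_exists[OF a, of p] assms by auto
  obtain t where t: "0 < t" "t \<le> 1" "shifted_powr_sum (\<epsilon>/2) q t = 2"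
    using shifted_powr_sum_eq_two_exists[OF a, of q] assms by auto
  have "shifted_powr_sum (\<epsilon>/2) q t < shifted_powr_sum (\<epsilon>/2) q s"
    using shifted_powr_sum_gt_two_larger_exponent[OF a(1), of p q s] assms s t by simp
  then have "t < s"
    using shifted_powr_sum_strict_mono[OF a(1), of q s t] assms s t by (smt (verit))
  moreover have "delta p \<epsilon> = 1 - s" "delta q \<epsilon> = 1 - t"
    using assms s t by (auto intro: delta_eq_if_shifted_powr_sum_eq_two)
  ultimately show ?thesis
    by simp
qed

theorem proposition3p15:
  fixes \<epsilon> :: real
  assumes "0 < \<epsilon>" and "\<epsilon> < 2"
  shows "(\<forall>p1 p2. 2 \<le> p1 \<and> p1 < p2 \<longrightarrow> delta p2 \<epsilon> < delta p1 \<epsilon>)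
       \<and> (\<forall>p1 p2. 1 < p1 \<and> p1 < p2 \<and> p2 \<le> 2 \<longrightarrow> delta p1 \<epsilon> < delta p2 \<epsilon>)"
  using assms delta_strict_antimono_ge_two delta_strict_mono_le_two by blast

end
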